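(* Let $c$ be a step speed function, $q\in\mathbb R$ and $(x,y)\in\mathcal W$. There exists $C=C(x,y,c(\cdot-q))<\infty$ such that for all $0<\delta\le1$, $$\Gamma^q(x,y+\delta)-\Gamma^q(x,y)<C\sqrt\delta.$$
   Context: A step speed function is $c(x)=\sum_{m=1}^{L-1}r_m\mathbf 1_{(a_m,a_{m+1})}(x)+\sum_{m=2}^{L-1}\min\{r_{m-1},r_m\}\mathbf 1_{\{a_m\}}(x)$ with $-\infty=a_1<\dots<a_L=+\infty$ and $r_m>0$. $\mathcal W=\{(x,y):y\ge0,x\ge-y\}$; $\gamma(x,y)=(\sqrt{x+y}+\sqrt y)^2$. $\mathcal H(x,y)$: continuous piecewise $C^1$ paths $\mathbf x=(x_1,x_2):[0,1]\to\mathcal W$ with $\mathbf x(0)=(0,0)$, $\mathbf x(1)=(x,y)$, $\mathbf x'(s)\in\mathcal W$ wherever defined. $\Gamma^q(x,y)=\sup_{\mathbf x\in\mathcal H(x,y)}\int_0^1\frac{\gamma(\mathbf x'(s))}{c(x_1(s)-q)}ds$. *)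

theory Defs
  imports "HOL-Analysis.Analysis"
begin

text \<open>Step speed function with finite breakpoints b 1 < ... < b k (k >= 0) and
 rates r 0, ..., r k > 0: c = r i on (b i, b (i+1)) (with b 0 = -infinity,
 b (k+1) = +infinity) and c (b i) = min (r (i-1)) (r i).\<close>
definition step_speed :: "(real \<Rightarrow> real) \<Rightarrow> bool" where
  "step_speed c \<longleftrightarrow> (\<exists>(k::nat) (b::nat \<Rightarrow> real) (r::nat \<Rightarrow> real).
     (\<forall>i j. 1 \<le> i \<longrightarrow> i < j \<longrightarrow> j \<le> k \<longrightarrow> b i < b j) \<and>
     (\<forall>i\<le>k. r i > 0) \<and>
     (\<forall>i\<le>k. \<forall>x. (i = 0 \<or> b i < x) \<and> (i = k \<or> x < b (i+1)) \<longrightarrow> c x = r i) \<and>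
     (\<forall>i. 1 \<le> i \<longrightarrow> i \<le> k \<longrightarrow> c (b i) = min (r (i-1)) (r i)))"

definition WW :: "(real \<times> real) set" where
  "WW = {(x, y). y \<ge> 0 \<and> x \<ge> - y}"

definition gam :: "real \<times> real \<Rightarrow> real" where
  "gam p = (sqrt (fst p + snd p) + sqrt (snd p))\<^sup>2"

definition paths_H :: "real \<times> real \<Rightarrow> (real \<Rightarrow> real \<times> real) set" where
  "paths_H p = {g. g piecewise_C1_differentiable_on {0..1} \<and>
       (\<forall>s\<in>{0..1}. g s \<in> WW) \<and> g 0 = (0, 0) \<and> g 1 = p \<and>
       (\<forall>s\<in>{0<..<1}. g differentiable (at s) \<longrightarrow> vector_derivative g (at s) \<in> WW)}"

definition Gamma_q :: "(real \<Rightarrow> real) \<Rightarrow> real \<Rightarrow> real \<times> real \<Rightarrow> real" where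
  "Gamma_q c q p = (SUP g\<in>paths_H p.
      integral {0..1} (\<lambda>s. gam (vector_derivative g (at s)) / c (fst (g s) - q)))"

end

theory Submission
  imports Defs
begin

(* Put kappa(t) = 1 / c(t - q).  For a step speed c this "slowness" kappa is
   nonnegative, bounded by some M, and every point is a local maximum of it (c is lower
   semicontinuous).  Such a kappa is the pointwise limit of its continuous Lipschitz envelopes,
   which lie between kappa and M; by dominated convergence this yields a change-of-variables
   formula, integral of f' * kappa(f) = oriented integral of kappa from f(alpha) to f(beta),
   for piecewise differentiable f, although kappa itself may be discontinuous.

   Given an admissible path g to (x, y + delta), take a time sigma at which g lies on the
   boundary of the cone (x, y) - W and replace g after sigma by the straight segment to (x, y).
   On [0, sigma] both paths cost the same.  After sigma the segment costs at least the absolute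
   value I of the oriented integral of kappa between fst g(sigma) and x, whereas the bound
   2 sqrt(u v) <= e u + v / e applied to gamma shows that g costs at most I + M O(sqrt delta),
   because one of the coordinates fst + snd or snd of g increases only by delta after sigma. *)

section \<open>Step speed functions\<close>

lemma step_speed_cover:
  assumes mono: "\<forall>i j. 1 \<le> i \<longrightarrow> i < j \<longrightarrow> j \<le> k \<longrightarrow> (b::nat\<Rightarrow>real) i < b j"
  shows "(\<exists>j. 1 \<le> j \<and> j \<le> k \<and> t = b j) \<or>
         (\<exists>i\<le>k. (i = 0 \<or> b i < t) \<and> (i = k \<or> t < b (i+1)))"
proof (cases "\<exists>j. 1 \<le> j \<and> j \<le> k \<and> t = b j")
  case False
  define S where "S = insert 0 {j. 1 \<le> j \<and> j \<le> k \<and> b j < t}"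
  have finS: "finite S" unfolding S_def by (auto intro: finite_subset[of _ "{..k}"])
  define i where "i = Max S"
  have iS: "i \<in> S" unfolding i_def using finS S_def by (intro Max_in) auto
  have imax: "\<And>j. j \<in> S \<Longrightarrow> j \<le> i" unfolding i_def using finS by auto
  have ik: "i \<le> k" and left: "i = 0 \<or> b i < t" using iS unfolding S_def by auto
  have right: "i = k \<or> t < b (i+1)"
  proof (rule ccontr)
    assume "\<not> (i = k \<or> t < b (i+1))"
    then have "i < k" "b (i+1) \<le> t" using ik by auto
    moreover have "t \<noteq> b (i+1)" using False \<open>i < k\<close> by auto
    ultimately have "i+1 \<in> S" unfolding S_def by auto
    then show False using imax by fastforce
  qed
  show ?thesis using left right ik by blast
qed blast

lemma step_speed_lower_bound:
  assumes "step_speed c"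
  obtains m where "0 < m" "\<And>t. m \<le> c t"
proof -
  obtain k b r where mono: "\<forall>i j. 1 \<le> i \<longrightarrow> i < j \<longrightarrow> j \<le> k \<longrightarrow> (b::nat\<Rightarrow>real) i < b j"
    and rpos: "\<forall>i\<le>k. (r::nat\<Rightarrow>real) i > 0"
    and reg: "\<forall>i\<le>k. \<forall>x. (i = 0 \<or> b i < x) \<and> (i = k \<or> x < b (i+1)) \<longrightarrow> c x = r i"
    and brk: "\<forall>i. 1 \<le> i \<longrightarrow> i \<le> k \<longrightarrow> c (b i) = min (r (i-1)) (r i)"
    using assms unfolding step_speed_def by blast
  define m where "m = Min (r ` {..k})"
  have mle: "\<And>i. i \<le> k \<Longrightarrow> m \<le> r i" unfolding m_def by auto
  have "m \<le> c t" for t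
    using step_speed_cover[OF mono, of t]
  proof
    assume "\<exists>j. 1 \<le> j \<and> j \<le> k \<and> t = b j"
    then obtain j where "1 \<le> j" "j \<le> k" "t = b j" by blast
    then show ?thesis using brk mle[of j] mle[of "j-1"] by auto
  next
    assume "\<exists>i\<le>k. (i = 0 \<or> b i < t) \<and> (i = k \<or> t < b (i+1))"
    then obtain i where "i \<le> k" "(i = 0 \<or> b i < t) \<and> (i = k \<or> t < b (i+1))" by blast
    then have "c t = r i" using reg by blast
    then show ?thesis using mle \<open>i \<le> k\<close> by simp
  qed
  moreover have "0 < m" unfolding m_def using rpos by (subst Min_gr_iff) auto
  ultimately show ?thesis using that by blast
qed

text \<open>Near a breakpoint a step speed function takes the two neighbouring rates, and its value
  at the breakpoint is their minimum; so the breakpoint is a local minimum.\<close>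

lemma step_local_min_at_breakpoint:
  fixes c :: "real \<Rightarrow> real" and r :: "nat \<Rightarrow> real"
  assumes mono: "\<forall>i j. 1 \<le> i \<longrightarrow> i < j \<longrightarrow> j \<le> k \<longrightarrow> (b::nat\<Rightarrow>real) i < b j"
    and reg: "\<forall>i\<le>k. \<forall>x. (i = 0 \<or> b i < x) \<and> (i = k \<or> x < b (i+1)) \<longrightarrow> c x = r i"
    and brk: "\<forall>i. 1 \<le> i \<longrightarrow> i \<le> k \<longrightarrow> c (b i) = min (r (i-1)) (r i)"
    and j: "1 \<le> j" "j \<le> k"
  shows "\<exists>e>0. \<forall>s. \<bar>s - b j\<bar> < e \<longrightarrow> c (b j) \<le> c s"
proof -
  define e where "e = min (if j = 1 then 1 else b j - b (j-1)) (if j = k then 1 else b (j+1) - b j)"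
  have "j \<noteq> 1 \<Longrightarrow> b (j-1) < b j" "j \<noteq> k \<Longrightarrow> b j < b (j+1)" using mono j by auto
  then have "e > 0" unfolding e_def by auto
  moreover have "c (b j) \<le> c s" if "\<bar>s - b j\<bar> < e" for s
  proof (cases s "b j" rule: linorder_cases)
    case less
    have "(j-1 = 0 \<or> b (j-1) < s) \<and> (j-1 = k \<or> s < b (j-1+1))"
      using less that j unfolding e_def by (auto split: if_splits)
    then have "c s = r (j-1)" using reg j by auto
    moreover have "c (b j) = min (r (j-1)) (r j)" using brk j by auto
    ultimately show ?thesis by simp
  next
    case greater
    have "(j = 0 \<or> b j < s) \<and> (j = k \<or> s < b (j+1))"
      using greater that j unfolding e_def by (auto split: if_splits)
    then have "c s = r j" using reg j by auto
    moreover have "c (b j) = min (r (j-1)) (r j)" using brk j by auto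
    ultimately show ?thesis by simp
  qed simp
  ultimately show ?thesis by blast
qed

lemma step_local_min_inside:
  fixes c :: "real \<Rightarrow> real" and r :: "nat \<Rightarrow> real"
  assumes reg: "\<forall>i\<le>k. \<forall>x. (i = 0 \<or> b i < x) \<and> (i = k \<or> x < b (i+1)) \<longrightarrow> c x = r i"
    and i: "i \<le> k" "(i = 0 \<or> b i < t) \<and> (i = k \<or> t < b (i+1))"
  shows "\<exists>e>0. \<forall>s. \<bar>s - t\<bar> < e \<longrightarrow> c t \<le> c s"
proof -
  define e where "e = min (if i = 0 then 1 else t - b i) (if i = k then 1 else b (i+1) - t)"
  have "c t \<le> c s" if "\<bar>s - t\<bar> < e" for s
  proof -
    have "(i = 0 \<or> b i < s) \<and> (i = k \<or> s < b (i+1))"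
      using that i unfolding e_def by (auto split: if_splits)
    then have "c s = r i" using reg i by auto
    moreover have "c t = r i" using reg i by auto
    ultimately show ?thesis by simp
  qed
  moreover have "e > 0" unfolding e_def using i by auto
  ultimately show ?thesis by blast
qed

lemma step_speed_local_min:
  assumes "step_speed c"
  shows "\<exists>e>0. \<forall>s. \<bar>s - t\<bar> < e \<longrightarrow> c t \<le> c s"
proof -
  obtain k b r where mono: "\<forall>i j. 1 \<le> i \<longrightarrow> i < j \<longrightarrow> j \<le> k \<longrightarrow> (b::nat\<Rightarrow>real) i < b j"
    and reg: "\<forall>i\<le>k. \<forall>x. (i = 0 \<or> b i < x) \<and> (i = k \<or> x < b (i+1)) \<longrightarrow> c x = r i"
    and brk: "\<forall>i. 1 \<le> i \<longrightarrow> i \<le> k \<longrightarrow> c (b i) = min (r (i-1)) (r i)"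
    using assms unfolding step_speed_def by blast
  show ?thesis
    using step_speed_cover[OF mono, of t]
  proof
    assume "\<exists>j. 1 \<le> j \<and> j \<le> k \<and> t = b j"
    then obtain j where "1 \<le> j" "j \<le> k" "t = b j" by blast
    then show ?thesis using step_local_min_at_breakpoint[OF mono reg brk] by blast
  next
    assume "\<exists>i\<le>k. (i = 0 \<or> b i < t) \<and> (i = k \<or> t < b (i+1))"
    then obtain i where "i \<le> k" "(i = 0 \<or> b i < t) \<and> (i = k \<or> t < b (i+1))" by blast
    then show ?thesis by (rule step_local_min_inside[OF reg])
  qed
qed

section \<open>Bounded slownesses with a local maximum at every point\<close>

definition oriented_integral :: "(real \<Rightarrow> real) \<Rightarrow> real \<Rightarrow> real \<Rightarrow> real" where
  "oriented_integral f a b = (if a \<le> b then integral {a..b} f else - integral {b..a} f)"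

locale slowness =
  fixes \<kappa> :: "real \<Rightarrow> real" and M :: real
  assumes nonneg: "0 \<le> \<kappa> t"
    and bounded: "\<kappa> t \<le> M"
    and local_max: "\<exists>e>0. \<forall>s. \<bar>s - t\<bar> < e \<longrightarrow> \<kappa> s \<le> \<kappa> t"
begin

lemma bound_nonneg: "0 \<le> M"
  using nonneg[of 0] bounded[of 0] by linarith

text \<open>The Lipschitz envelopes of the slowness: continuous, between the slowness and M, and
  (because every point is a local maximum) eventually equal to the slowness at each point.\<close>

definition envelope :: "nat \<Rightarrow> real \<Rightarrow> real" where
  "envelope n t = (SUP s. \<kappa> s - real n * \<bar>s - t\<bar>)"

lemma penalized_le_bound: "\<kappa> s - real n * \<bar>s - t\<bar> \<le> M"
proof -
  have "0 \<le> real n * \<bar>s - t\<bar>" by simp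
  then show ?thesis using bounded[of s] by linarith
qed

lemma envelope_bdd: "bdd_above (range (\<lambda>s. \<kappa> s - real n * \<bar>s - t\<bar>))"
  by (rule bdd_aboveI[where M=M]) (auto intro: penalized_le_bound)

lemma envelope_ge: "\<kappa> s - real n * \<bar>s - t\<bar> \<le> envelope n t"
  unfolding envelope_def by (rule cSUP_upper[OF _ envelope_bdd]) simp

lemma envelope_le: "envelope n t \<le> M"
  unfolding envelope_def by (rule cSUP_least) (auto intro: penalized_le_bound)

lemma envelope_nonneg: "0 \<le> envelope n t"
  using envelope_ge[of t n t] nonneg[of t] by simp

lemma envelope_continuous: "continuous_on UNIV (envelope n)"
proof (rule lipschitz_on_continuous_on)
  have shift: "envelope n t \<le> envelope n t' + real n * \<bar>t - t'\<bar>" for t t'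
    unfolding envelope_def[of n t]
  proof (rule cSUP_least)
    fix s
    have "real n * \<bar>s - t'\<bar> \<le> real n * (\<bar>s - t\<bar> + \<bar>t - t'\<bar>)"
      by (intro mult_left_mono) auto
    then show "\<kappa> s - real n * \<bar>s - t\<bar> \<le> envelope n t' + real n * \<bar>t - t'\<bar>"
      using envelope_ge[of s n t'] by (simp add: algebra_simps)
  qed simp
  show "lipschitz_on (real n) UNIV (envelope n)"
  proof (rule lipschitz_onI)
    fix t t' :: real
    show "dist (envelope n t) (envelope n t') \<le> real n * dist t t'"
      using shift[of t t'] shift[of t' t] by (simp add: dist_real_def abs_le_iff abs_minus_commute)
  qed simp
qed

lemma envelope_tendsto: "(\<lambda>n. envelope n t) \<longlonglongrightarrow> \<kappa> t"
proof (rule tendsto_eventually)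
  obtain e where e: "e > 0" "\<forall>s. \<bar>s - t\<bar> < e \<longrightarrow> \<kappa> s \<le> \<kappa> t" using local_max by blast
  show "eventually (\<lambda>n. envelope n t = \<kappa> t) sequentially"
  proof (rule eventually_sequentiallyI[of "nat \<lceil>M / e\<rceil>"])
    fix n assume n: "nat \<lceil>M / e\<rceil> \<le> n"
    have "M / e \<le> real n" using n by linarith
    then have Mn: "M \<le> real n * e" using e(1) by (simp add: field_simps)
    have "envelope n t \<le> \<kappa> t"
      unfolding envelope_def
    proof (rule cSUP_least)
      fix s
      show "\<kappa> s - real n * \<bar>s - t\<bar> \<le> \<kappa> t"
      proof (cases "\<bar>s - t\<bar> < e")
        case True
        have "0 \<le> real n * \<bar>s - t\<bar>" by simp
        moreover have "\<kappa> s \<le> \<kappa> t" using True e(2) by blast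
        ultimately show ?thesis by linarith
      next
        case False
        then have "real n * e \<le> real n * \<bar>s - t\<bar>" by (simp add: mult_left_mono)
        then show ?thesis using Mn bounded[of s] nonneg[of t] by linarith
      qed
    qed simp
    then show "envelope n t = \<kappa> t" using envelope_ge[of t n t] by simp
  qed
qed

lemma integral_envelope_tendsto:
  "(\<lambda>n. integral {a..b} (envelope n)) \<longlonglongrightarrow> integral {a..b} \<kappa>"
proof (rule dominated_convergence(2))
  show "envelope n integrable_on {a..b}" for n
    using envelope_continuous continuous_on_subset integrable_continuous_interval by blast
  show "(\<lambda>s. M) integrable_on {a..b}" by (rule integrable_const_ivl)
  show "norm (envelope n s) \<le> M" for n s using envelope_nonneg envelope_le by simp
qed (rule envelope_tendsto)

text \<open>The slowness along a continuous curve is integrable, although it may be discontinuous.\<close>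

lemma integrable_comp:
  fixes \<phi> :: "real \<Rightarrow> real"
  assumes \<phi>: "continuous_on {a..b} \<phi>"
  shows "(\<lambda>s. \<kappa> (\<phi> s)) integrable_on {a..b}"
proof (rule dominated_convergence(1))
  show "(\<lambda>s. envelope n (\<phi> s)) integrable_on {a..b}" for n
    by (rule integrable_continuous_interval, rule continuous_on_compose2[OF envelope_continuous \<phi>])
       auto
  show "(\<lambda>s. M) integrable_on {a..b}" by (rule integrable_const_ivl)
  show "norm (envelope n (\<phi> s)) \<le> M" for n s using envelope_nonneg envelope_le by simp
qed (rule envelope_tendsto)

lemma oriented_integral_split:
  assumes "L \<le> a" "L \<le> b"
  shows "oriented_integral \<kappa> a b = integral {L..b} \<kappa> - integral {L..a} \<kappa>"
proof -
  have int: "\<kappa> integrable_on {L..max a b}"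
    using integrable_comp[OF continuous_on_id] by simp
  have combine: "integral {L..v} \<kappa> = integral {L..u} \<kappa> + integral {u..v} \<kappa>"
    if "L \<le> u" "u \<le> v" "v \<le> max a b" for u v
  proof -
    have "\<kappa> integrable_on {L..v}" using integrable_on_subinterval[OF int] that by auto
    from Henstock_Kurzweil_Integration.integral_combine[OF that(1,2) this] show ?thesis by simp
  qed
  show ?thesis
    using combine[of a b] combine[of b a] assms by (auto simp: oriented_integral_def)
qed

lemma envelope_primitive_deriv:
  assumes "L < z"
  shows "((\<lambda>z. integral {L..z} (envelope n)) has_real_derivative envelope n z) (at z)"
proof -
  have "((\<lambda>z. integral {L..z} (envelope n)) has_real_derivative envelope n z) (at z within {L..z+1})"
    by (rule integral_has_real_derivative)
       (use continuous_on_subset[OF envelope_continuous] assms in auto)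
  moreover have "at z within {L..z+1} = at z"
    by (rule at_within_interior) (use assms in auto)
  ultimately show ?thesis by simp
qed

text \<open>Change of variables for a continuous envelope, by the fundamental theorem of calculus
  applied to its primitive along f; L is any bound below the values of f.\<close>

lemma envelope_chain_rule:
  assumes T: "finite T" and ab: "\<alpha> \<le> \<beta>" and fc: "continuous_on {\<alpha>..\<beta>} f"
    and fd: "\<And>s. s \<in> {\<alpha><..<\<beta>} - T \<Longrightarrow> (f has_real_derivative f' s) (at s)"
    and fL: "\<And>s. s \<in> {\<alpha>..\<beta>} \<Longrightarrow> L < f s"
  shows "((\<lambda>s. f' s * envelope n (f s)) has_integral
           integral {L..f \<beta>} (envelope n) - integral {L..f \<alpha>} (envelope n)) {\<alpha>..\<beta>}"
proof (rule fundamental_theorem_of_calculus_interior_strong[OF T ab])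
  define G where "G z = integral {L..z} (envelope n)" for z
  have Gd: "(G has_real_derivative envelope n z) (at z)" if "L < z" for z
    unfolding G_def[abs_def] using that by (rule envelope_primitive_deriv)
  show "((\<lambda>s. G (f s)) has_vector_derivative f' s * envelope n (f s)) (at s)"
    if s: "s \<in> {\<alpha><..<\<beta>} - T" for s
  proof -
    have "((\<lambda>s. G (f s)) has_real_derivative envelope n (f s) * f' s) (at s)"
      by (rule DERIV_chain2[OF Gd fd[OF s]]) (use s fL in auto)
    then show ?thesis by (simp add: has_real_derivative_iff_has_vector_derivative mult.commute)
  qed
  have "continuous_on {L<..} G"
    by (rule continuous_at_imp_continuous_on) (use Gd DERIV_isCont in blast)
  then show "continuous_on {\<alpha>..\<beta>} (\<lambda>s. G (f s))"
    by (rule continuous_on_compose2[OF _ fc]) (use fL in auto)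
qed

text \<open>It is obtained from the envelopes by dominated convergence.\<close>

lemma chain_rule:
  assumes T: "finite T" and ab: "\<alpha> \<le> \<beta>" and fc: "continuous_on {\<alpha>..\<beta>} f"
    and fd: "\<And>s. s \<in> {\<alpha><..<\<beta>} - T \<Longrightarrow> (f has_real_derivative f' s) (at s)"
    and di: "d integrable_on {\<alpha>..\<beta>}" and dle: "\<And>s. s \<in> {\<alpha>..\<beta>} \<Longrightarrow> \<bar>f' s\<bar> \<le> d s"
  shows "((\<lambda>s. f' s * \<kappa> (f s)) has_integral oriented_integral \<kappa> (f \<alpha>) (f \<beta>)) {\<alpha>..\<beta>}"
proof -
  obtain B where B: "\<forall>s\<in>{\<alpha>..\<beta>}. \<bar>f s\<bar> \<le> B"
    using compact_imp_bounded[OF compact_continuous_image[OF fc compact_Icc]]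
    unfolding bounded_real by auto
  define L where "L = - B - 1"
  have fL: "L < f s" if "s \<in> {\<alpha>..\<beta>}" for s using B that unfolding L_def by force
  note ftc = envelope_chain_rule[OF T ab fc fd fL]
  define F where "F n s = f' s * envelope n (f s)" for n s
  have Fi: "F n integrable_on {\<alpha>..\<beta>}" for n
    using has_integral_integrable[OF ftc] unfolding F_def .
  have Md: "(\<lambda>s. M * d s) integrable_on {\<alpha>..\<beta>}"
    using integrable_on_cmult_left[OF di, of M] by simp
  have Fle: "norm (F n s) \<le> M * d s" if "s \<in> {\<alpha>..\<beta>}" for n s
  proof -
    have "\<bar>f' s\<bar> * envelope n (f s) \<le> d s * M"
      by (rule mult_mono) (use dle[OF that] envelope_nonneg envelope_le in auto)
    then show ?thesis
      unfolding F_def using envelope_nonneg[of n "f s"] by (simp add: abs_mult mult.commute)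
  qed
  have Fconv: "(\<lambda>n. F n s) \<longlonglongrightarrow> f' s * \<kappa> (f s)" for s
    unfolding F_def by (intro tendsto_mult_left envelope_tendsto)
  note DC = dominated_convergence[OF Fi Md Fle Fconv]
  have "(\<lambda>n. integral {L..f \<beta>} (envelope n) - integral {L..f \<alpha>} (envelope n))
      \<longlonglongrightarrow> integral {\<alpha>..\<beta>} (\<lambda>s. f' s * \<kappa> (f s))"
    using DC(2) integral_unique[OF ftc] unfolding F_def by simp
  moreover have "(\<lambda>n. integral {L..f \<beta>} (envelope n) - integral {L..f \<alpha>} (envelope n))
      \<longlonglongrightarrow> integral {L..f \<beta>} \<kappa> - integral {L..f \<alpha>} \<kappa>"
    by (intro tendsto_diff integral_envelope_tendsto)
  ultimately have "integral {\<alpha>..\<beta>} (\<lambda>s. f' s * \<kappa> (f s))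
      = integral {L..f \<beta>} \<kappa> - integral {L..f \<alpha>} \<kappa>"
    using LIMSEQ_unique by blast
  also have "\<dots> = oriented_integral \<kappa> (f \<alpha>) (f \<beta>)"
    using oriented_integral_split[of L "f \<alpha>" "f \<beta>"] fL[of \<alpha>] fL[of \<beta>] ab by simp
  finally show ?thesis using DC(1) by (metis has_integral_integrable_integral)
qed

end

lemma step_speed_slowness:
  assumes "step_speed c"
  obtains M where "slowness (\<lambda>t. inverse (c (t - q))) M"
proof -
  obtain m where m0: "0 < m" and mle: "\<And>t. m \<le> c t"
    using step_speed_lower_bound[OF assms] by blast
  have cpos: "0 < c t" for t using m0 mle[of t] by linarith
  have "slowness (\<lambda>t. inverse (c (t - q))) (inverse m)"
  proof
    show "0 \<le> inverse (c (t - q))" for t using cpos[of "t - q"] by simp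
    show "inverse (c (t - q)) \<le> inverse m" for t by (rule le_imp_inverse_le[OF mle m0])
    show "\<exists>e>0. \<forall>s. \<bar>s - t\<bar> < e \<longrightarrow> inverse (c (s - q)) \<le> inverse (c (t - q))" for t
    proof -
      obtain e where "e > 0" and e: "\<forall>s. \<bar>s - (t - q)\<bar> < e \<longrightarrow> c (t - q) \<le> c s"
        using step_speed_local_min[OF assms] by blast
      have "inverse (c (s - q)) \<le> inverse (c (t - q))" if "\<bar>s - t\<bar> < e" for s
        using e[rule_format, of "s - q"] that cpos by (simp add: le_imp_inverse_le)
      then show ?thesis using \<open>e > 0\<close> by blast
    qed
  qed
  then show ?thesis by (rule that)
qed

section \<open>The cone W and the admissible paths\<close>

text \<open>W in coordinates: nonnegative height snd and level fst + snd; it is a convex cone.\<close>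

lemma WW_iff: "(a, b) \<in> WW \<longleftrightarrow> 0 \<le> b \<and> 0 \<le> a + b"
  unfolding WW_def by auto

lemma WW_convex:
  assumes "a \<in> WW" "b \<in> WW" "0 \<le> t" "t \<le> 1"
  shows "a + t *\<^sub>R (b - a) \<in> WW"
proof -
  obtain a1 a2 b1 b2 where ab: "a = (a1, a2)" "b = (b1, b2)" by (cases a, cases b) auto
  have h: "0 \<le> a2" "0 \<le> a1 + a2" "0 \<le> b2" "0 \<le> b1 + b2" using assms(1,2) ab by (auto simp: WW_iff)
  have "0 \<le> (1 - t) * a2 + t * b2" "0 \<le> (1 - t) * (a1 + a2) + t * (b1 + b2)"
    using h assms(3,4) by (simp_all add: add_nonneg_nonneg)
  then show ?thesis using ab by (simp add: WW_iff algebra_simps)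
qed

lemma WW_scale: "a \<in> WW \<Longrightarrow> 0 \<le> t \<Longrightarrow> t *\<^sub>R a \<in> WW"
  by (cases a) (auto simp: WW_iff simp flip: distrib_left)

text \<open>The straight path from the origin to a point of W is admissible; in particular the
  suprema defining Gamma are taken over nonempty sets.\<close>

lemma line_in_paths_H:
  assumes "p \<in> WW"
  shows "(\<lambda>s. s *\<^sub>R p) \<in> paths_H p"
proof -
  have d: "((\<lambda>s. s *\<^sub>R p) has_vector_derivative p) (at s)" for s
  proof -
    have "((\<lambda>s. s *\<^sub>R p) has_vector_derivative 1 *\<^sub>R p) (at s within UNIV)"
      by (auto intro!: derivative_eq_intros)
    then show ?thesis by simp
  qed
  have "(\<lambda>s. s *\<^sub>R p) piecewise_C1_differentiable_on {0..1}"
    by (intro C1_differentiable_imp_piecewise derivative_intros)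
  moreover have "\<forall>s\<in>{0..1}. s *\<^sub>R p \<in> WW" using WW_scale[OF assms] by auto
  moreover have "vector_derivative (\<lambda>s. s *\<^sub>R p) (at s) = p" for s using d by (rule vector_derivative_at)
  moreover have "(0::real) *\<^sub>R p = (0, 0)" by (simp add: zero_prod_def)
  ultimately show ?thesis unfolding paths_H_def using assms by simp
qed

lemma paths_H_derivative:
  assumes "g \<in> paths_H p"
  obtains T D where "finite T"
    "\<And>s. s \<in> {0..1} - T \<Longrightarrow> (g has_vector_derivative D s) (at s)"
    "\<And>s. s \<in> {0..1} - T \<Longrightarrow> vector_derivative g (at s) = D s"
    "\<And>s. s \<in> {0..1} - T \<Longrightarrow> D s \<in> WW"
    "continuous_on {0..1} g" "\<And>s. s \<in> {0..1} \<Longrightarrow> g s \<in> WW" "g 0 = (0,0)" "g 1 = p"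
proof -
  have pc: "g piecewise_C1_differentiable_on {0..1}" and W: "\<forall>s\<in>{0..1}. g s \<in> WW"
    and g0: "g 0 = (0,0)" and g1: "g 1 = p"
    and dW: "\<forall>s\<in>{0<..<1}. g differentiable (at s) \<longrightarrow> vector_derivative g (at s) \<in> WW"
    using assms unfolding paths_H_def by auto
  obtain S where S: "finite S" "g C1_differentiable_on {0..1} - S" and gc: "continuous_on {0..1} g"
    using pc unfolding piecewise_C1_differentiable_on_def by blast
  obtain D where D: "\<And>s. s \<in> {0..1} - S \<Longrightarrow> (g has_vector_derivative D s) (at s)"
    using S(2) unfolding C1_differentiable_on_def by blast
  define T where "T = insert 0 (insert 1 S)"
  have T: "finite T" "0 \<in> T" "1 \<in> T" using S unfolding T_def by auto
  have D': "\<And>s. s \<in> {0..1} - T \<Longrightarrow> (g has_vector_derivative D s) (at s)"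
    using D unfolding T_def by auto
  have vd: "\<And>s. s \<in> {0..1} - T \<Longrightarrow> vector_derivative g (at s) = D s"
    using D' vector_derivative_at by blast
  have DW: "D s \<in> WW" if s: "s \<in> {0..1} - T" for s
  proof -
    have "s \<in> {0<..<1}" using s T unfolding T_def by auto
    moreover have "g differentiable (at s)" using D'[OF s] differentiableI_vector by blast
    ultimately show "D s \<in> WW" using dW vd[OF s] by metis
  qed
  show ?thesis using that[OF T(1) D' vd DW gc] W g0 g1 by blast
qed

lemma has_vector_derivative_fst:
  "(g has_vector_derivative D) F \<Longrightarrow> ((\<lambda>s. fst (g s)) has_vector_derivative fst D) F"
  unfolding has_vector_derivative_def by (drule has_derivative_fst) simp

lemma path_increment:
  fixes g D :: "real \<Rightarrow> real \<times> real"
  assumes "finite T" "continuous_on {0..1} g"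
    and "\<And>s. s \<in> {0..1} - T \<Longrightarrow> (g has_vector_derivative D s) (at s)"
    and "0 \<le> \<alpha>" "\<alpha> \<le> \<beta>" "\<beta> \<le> 1"
  shows "(D has_integral g \<beta> - g \<alpha>) {\<alpha>..\<beta>}"
proof (rule fundamental_theorem_of_calculus_interior_strong[OF assms(1,5)])
  show "continuous_on {\<alpha>..\<beta>} g" using assms(2,4,6) continuous_on_subset by fastforce
qed (use assms(3,4,6) in auto)

lemma has_integral_coordinates:
  fixes D :: "real \<Rightarrow> real \<times> real"
  assumes "(D has_integral p) S"
  shows "((\<lambda>s. snd (D s)) has_integral snd p) S"
    and "((\<lambda>s. fst (D s) + snd (D s)) has_integral fst p + snd p) S"
proof -
  show "((\<lambda>s. snd (D s)) has_integral snd p) S"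
    using has_integral_linear[OF assms bounded_linear_snd] by (simp add: o_def)
  have "bounded_linear (\<lambda>p::real \<times> real. fst p + snd p)"
    by (intro bounded_linear_add bounded_linear_fst bounded_linear_snd)
  from has_integral_linear[OF assms this]
  show "((\<lambda>s. fst (D s) + snd (D s)) has_integral fst p + snd p) S"
    by (simp add: o_def)
qed

lemma path_velocity:
  assumes g: "g \<in> paths_H p" and \<alpha>\<beta>: "0 \<le> \<alpha>" "\<alpha> \<le> \<beta>" "\<beta> \<le> 1"
  obtains T A B where "finite T" and "continuous_on {0..1} g"
    and "\<And>s. s \<in> {0..1} - T \<Longrightarrow> vector_derivative g (at s) = (A s, B s)"
    and "\<And>s. s \<in> {0..1} - T \<Longrightarrow> 0 \<le> B s \<and> 0 \<le> A s + B s"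
    and "\<And>s. s \<in> {0..1} - T \<Longrightarrow> ((\<lambda>s. fst (g s)) has_real_derivative A s) (at s)"
    and "(B has_integral snd (g \<beta>) - snd (g \<alpha>)) {\<alpha>..\<beta>}"
    and "((\<lambda>s. A s + B s) has_integral (fst (g \<beta>) + snd (g \<beta>)) - (fst (g \<alpha>) + snd (g \<alpha>)))
           {\<alpha>..\<beta>}"
proof -
  obtain T D where T: "finite T"
    and Dd: "\<And>s. s \<in> {0..1} - T \<Longrightarrow> (g has_vector_derivative D s) (at s)"
    and vdg: "\<And>s. s \<in> {0..1} - T \<Longrightarrow> vector_derivative g (at s) = D s"
    and DW: "\<And>s. s \<in> {0..1} - T \<Longrightarrow> D s \<in> WW" and gc: "continuous_on {0..1} g"
    using paths_H_derivative[OF g] by metis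
  define A where "A s = fst (D s)" for s
  define B where "B s = snd (D s)" for s
  note incr = has_integral_coordinates[OF path_increment[OF T gc Dd \<alpha>\<beta>]]
  show ?thesis
  proof (rule that[OF T gc])
    show "vector_derivative g (at s) = (A s, B s)" if "s \<in> {0..1} - T" for s
      using vdg[OF that] by (simp add: A_def B_def)
    show "0 \<le> B s \<and> 0 \<le> A s + B s" if "s \<in> {0..1} - T" for s
      using DW[OF that] unfolding A_def B_def by (cases "D s") (auto simp: WW_iff)
    show "((\<lambda>s. fst (g s)) has_real_derivative A s) (at s)" if "s \<in> {0..1} - T" for s
      using has_vector_derivative_fst[OF Dd[OF that]]
      by (simp add: A_def has_real_derivative_iff_has_vector_derivative)
    show "(B has_integral snd (g \<beta>) - snd (g \<alpha>)) {\<alpha>..\<beta>}"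
      using incr(1) by (simp add: B_def[abs_def])
    show "((\<lambda>s. A s + B s) has_integral (fst (g \<beta>) + snd (g \<beta>)) - (fst (g \<alpha>) + snd (g \<alpha>)))
            {\<alpha>..\<beta>}"
      using incr(2) by (simp add: A_def B_def algebra_simps)
  qed
qed

text \<open>A path g ending at (x, y + \<delta>) must touch the boundary of the cone (x, y) - W below
  (x, y) before its end: at some time its level fst + snd equals x + y or its height snd
  equals y, while it still lies in that cone.\<close>

lemma exit_time:
  fixes g :: "real \<Rightarrow> real \<times> real"
  assumes gc: "continuous_on {0..1} g" and g0: "g 0 = (0, 0)" and g1: "g 1 = (x, y + \<delta>)"
    and xy: "(x, y) \<in> WW" and \<delta>: "0 < \<delta>"
  obtains \<sigma> where "0 \<le> \<sigma>" "\<sigma> < 1" "(x, y) - g \<sigma> \<in> WW"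
    "fst (g \<sigma>) + snd (g \<sigma>) = x + y \<or> snd (g \<sigma>) = y"
proof -
  define m where "m s = max (fst (g s) + snd (g s) - (x + y)) (snd (g s) - y)" for s
  have "continuous_on {0..1} m"
    unfolding m_def using gc by (intro continuous_intros)
  then obtain \<sigma> where \<sigma>: "0 \<le> \<sigma>" "\<sigma> \<le> 1" and m\<sigma>: "m \<sigma> = 0"
    using IVT'[of m 0 0 1] g0 g1 xy \<delta> by (force simp: m_def WW_iff)
  moreover have "\<sigma> \<noteq> 1" using m\<sigma> g1 \<delta> by (auto simp: m_def)
  ultimately show ?thesis
    using that by (cases "g \<sigma>") (auto simp: m_def WW_iff max_def split: if_splits)
qed

definition splice_velocity :: "(real \<Rightarrow> real \<times> real) \<Rightarrow> real \<Rightarrow> real \<times> real \<Rightarrow> real \<times> real" where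
  "splice_velocity g \<sigma> p = inverse (1 - \<sigma>) *\<^sub>R (p - g \<sigma>)"

definition splice_path :: "(real \<Rightarrow> real \<times> real) \<Rightarrow> real \<Rightarrow> real \<times> real \<Rightarrow> real \<Rightarrow> real \<times> real" where
  "splice_path g \<sigma> p s = (if s \<le> \<sigma> then g s else g \<sigma> + (s - \<sigma>) *\<^sub>R splice_velocity g \<sigma> p)"

lemma splice_head_derivative:
  assumes "s < \<sigma>" "(g has_vector_derivative D) (at s)"
  shows "(splice_path g \<sigma> p has_vector_derivative D) (at s)"
  by (rule has_vector_derivative_transform_within_open[OF assms(2), of "{..<\<sigma>}"])
     (use assms(1) in \<open>auto simp: splice_path_def\<close>)

lemma splice_tail_derivative:
  assumes "\<sigma> < s"
  shows "(splice_path g \<sigma> p has_vector_derivative splice_velocity g \<sigma> p) (at s)"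
proof -
  have "((\<lambda>t. g \<sigma> + (t - \<sigma>) *\<^sub>R splice_velocity g \<sigma> p) has_vector_derivative
          splice_velocity g \<sigma> p) (at s within UNIV)"
    by (auto intro!: derivative_eq_intros)
  then show ?thesis
    by (rule has_vector_derivative_transform_within_open[of _ _ _ "{\<sigma><..}"])
       (use assms in \<open>auto simp: splice_path_def\<close>)
qed

lemma splice_velocity_WW:
  assumes "p - g \<sigma> \<in> WW" "\<sigma> < 1"
  shows "splice_velocity g \<sigma> p \<in> WW"
  unfolding splice_velocity_def using assms by (intro WW_scale) auto

text \<open>Wherever the spliced path is differentiable its velocity is in W: before \<sigma> it is that
  of g, from \<sigma> on (using the right derivative at \<sigma>) it is the velocity of the segment.\<close>

lemma splice_derivative_WW:
  assumes g: "g \<in> paths_H p0" and \<sigma>: "\<sigma> < 1" and below: "p - g \<sigma> \<in> WW"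
    and s: "s \<in> {0<..<1}" and hd: "splice_path g \<sigma> p differentiable (at s)"
  shows "vector_derivative (splice_path g \<sigma> p) (at s) \<in> WW"
proof -
  define h where "h = splice_path g \<sigma> p"
  obtain D' where D': "(h has_vector_derivative D') (at s)"
    using hd vector_derivative_works unfolding h_def by blast
  then have vd: "vector_derivative h (at s) = D'" by (rule vector_derivative_at)
  show ?thesis
  proof (cases "s < \<sigma>")
    case True
    have "(g has_vector_derivative D') (at s)"
      by (rule has_vector_derivative_transform_within_open[OF D', of "{..<\<sigma>}"])
         (use True in \<open>auto simp: h_def splice_path_def\<close>)
    then have "g differentiable (at s)" "vector_derivative g (at s) = D'"
      using differentiableI_vector vector_derivative_at by blast+
    then show ?thesis using g s vd unfolding paths_H_def h_def by auto
  next
    case False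
    define a where "a t = g \<sigma> + (t - \<sigma>) *\<^sub>R splice_velocity g \<sigma> p" for t
    have "h t = a t" if "s \<le> t" for t
    proof (cases "t \<le> \<sigma>")
      case True
      then have "t = \<sigma>" using False that by linarith
      then show ?thesis by (simp add: h_def a_def splice_path_def)
    qed (simp add: h_def a_def splice_path_def)
    then have "(a has_vector_derivative D') (at s within {s..})"
      by (intro has_vector_derivative_weaken[OF D'[THEN has_vector_derivative_at_within]]) auto
    moreover have "(a has_vector_derivative splice_velocity g \<sigma> p) (at s within {s..})"
      unfolding a_def by (auto intro!: derivative_eq_intros)
    moreover have "at s within {s..} \<noteq> bot" by (simp add: at_within_Ici_at_right)
    ultimately have "D' = splice_velocity g \<sigma> p" using vector_derivative_unique_within by blast
    then show ?thesis using vd splice_velocity_WW[of p g \<sigma>, OF below \<sigma>] unfolding h_def by simp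
  qed
qed

lemma splice_in_paths_H:
  assumes g: "g \<in> paths_H p0" and \<sigma>: "0 \<le> \<sigma>" "\<sigma> < 1" and p: "p \<in> WW"
    and below: "p - g \<sigma> \<in> WW"
  shows "splice_path g \<sigma> p \<in> paths_H p"
proof -
  have pc: "g piecewise_C1_differentiable_on {0..1}" and W: "\<forall>s\<in>{0..1}. g s \<in> WW"
    and g0: "g 0 = (0,0)"
    using g unfolding paths_H_def by auto
  have "splice_path g \<sigma> p piecewise_C1_differentiable_on {0..1}"
    unfolding splice_path_def[abs_def]
  proof (rule piecewise_C1_differentiable_cases)
    show "g piecewise_C1_differentiable_on {0..\<sigma>}"
      using pc piecewise_C1_differentiable_on_subset \<sigma> by fastforce
    show "(\<lambda>s. g \<sigma> + (s - \<sigma>) *\<^sub>R splice_velocity g \<sigma> p) piecewise_C1_differentiable_on {\<sigma>..1}"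
      by (intro C1_differentiable_imp_piecewise derivative_intros)
  qed (use \<sigma> in auto)
  moreover have "splice_path g \<sigma> p s \<in> WW" if "s \<in> {0..1}" for s
  proof (cases "s \<le> \<sigma>")
    case False
    have "splice_path g \<sigma> p s = g \<sigma> + ((s - \<sigma>) / (1 - \<sigma>)) *\<^sub>R (p - g \<sigma>)"
      using False by (simp add: splice_path_def splice_velocity_def divide_inverse)
    moreover have "0 \<le> (s - \<sigma>) / (1 - \<sigma>)" "(s - \<sigma>) / (1 - \<sigma>) \<le> 1" using False that \<sigma> by auto
    ultimately show ?thesis using WW_convex[OF _ p] W \<sigma> by simp
  qed (use W that in \<open>auto simp: splice_path_def\<close>)
  moreover have "splice_path g \<sigma> p 1 = p"
    using \<sigma> by (simp add: splice_path_def splice_velocity_def)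
  ultimately show ?thesis
    using g0 \<sigma> splice_derivative_WW[OF g \<sigma>(2) below]
    unfolding paths_H_def by (simp add: splice_path_def)
qed

section \<open>Elementary bounds for gamma\<close>

lemma two_sqrt_le:
  assumes "0 \<le> u" "0 \<le> v" "0 < e"
  shows "2 * (sqrt u * sqrt v) \<le> e * u + v / e"
proof -
  define p q where "p = sqrt u" and "q = sqrt v"
  have u: "u = p\<^sup>2" and v: "v = q\<^sup>2" using assms unfolding p_def q_def by auto
  have "0 \<le> (e * p - q)\<^sup>2 / e" using assms by simp
  also have "\<dots> = e * p\<^sup>2 + q\<^sup>2 / e - 2 * (p * q)"
    using assms by (simp add: field_simps power2_eq_square)
  finally have "2 * (p * q) \<le> e * u + v / e" unfolding u v by simp
  then show ?thesis by (simp add: p_def q_def)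
qed

lemma gam_expand:
  assumes "0 \<le> b" "0 \<le> a + b"
  shows "gam (a, b) = (a + b) + b + 2 * (sqrt (a + b) * sqrt b)"
  using assms unfolding gam_def by (simp add: power2_eq_square algebra_simps)

lemma gam_ge_abs:
  assumes "0 \<le> b" "0 \<le> a + b"
  shows "\<bar>a\<bar> \<le> gam (a, b)"
proof -
  have "0 \<le> sqrt (a + b) * sqrt b" using assms by simp
  then show ?thesis using gam_expand[OF assms] assms by linarith
qed

text \<open>Two upper bounds for gamma that keep the first coordinate exactly, with sign +1 or -1;
  the remainder is controlled by snd (first bound) or fst + snd (second bound).\<close>

lemma gam_le_plus:
  assumes "0 \<le> b" "0 \<le> a + b" "0 < e"
  shows "gam (a, b) \<le> a + (2 * b + e * (a + b) + b / e)"
  using gam_expand[OF assms(1,2)] two_sqrt_le[OF assms(2,1,3)] by linarith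

lemma gam_le_minus:
  assumes "0 \<le> b" "0 \<le> a + b" "0 < e"
  shows "gam (a, b) \<le> - a + (2 * (a + b) + e * b + (a + b) / e)"
  using gam_expand[OF assms(1,2)] two_sqrt_le[OF assms(1,2,3)] by (simp add: mult.commute)

lemma integral_le_finite:
  fixes f g :: "real \<Rightarrow> real"
  assumes "f integrable_on {a..b}" "g integrable_on {a..b}" "finite T"
    "\<And>s. s \<in> {a<..<b} - T \<Longrightarrow> f s \<le> g s"
  shows "integral {a..b} f \<le> integral {a..b} g"
proof -
  define T' where "T' = insert a (insert b T)"
  have fin: "finite T'" using assms(3) unfolding T'_def by simp
  define f' where "f' s = (if s \<in> T' then g s else f s)" for s
  have f': "f' integrable_on {a..b}"
    by (rule integrable_spike_finite[OF fin _ assms(1)]) (auto simp: f'_def)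
  have "integral {a..b} f' \<le> integral {a..b} g"
    by (rule integral_le[OF f' assms(2)]) (use assms(4) in \<open>auto simp: f'_def T'_def\<close>)
  moreover have "integral {a..b} f' = integral {a..b} f"
    by (rule integral_spike[of T']) (use fin negligible_finite in \<open>auto simp: f'_def\<close>)
  ultimately show ?thesis by simp
qed

text \<open>The square-root budget: with e = sqrt \<delta>, the error terms 2\<delta> + e \<Delta> + \<delta>/e are
  of order sqrt \<delta>.\<close>

lemma sqrt_budget:
  fixes \<delta> \<Delta> K :: real
  assumes "0 < \<delta>" "\<delta> \<le> 1" "\<Delta> \<le> K + 1"
  shows "2 * \<delta> + sqrt \<delta> * \<Delta> + \<delta> / sqrt \<delta> \<le> (K + 4) * sqrt \<delta>"
proof -
  define e where "e = sqrt \<delta>"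
  have e: "0 < e" "e \<le> 1" "\<delta> = e * e" unfolding e_def using assms by auto
  have "\<delta> / e = e" using e by simp
  moreover have "\<delta> \<le> e" using e mult_left_mono[of e 1 e] by simp
  moreover have "e * \<Delta> \<le> e * (K + 1)" using e assms(3) by (intro mult_left_mono) auto
  moreover have "(K + 4) * e = e * (K + 1) + 3 * e" by (simp add: algebra_simps)
  ultimately show ?thesis unfolding e_def[symmetric] by linarith
qed

section \<open>The cost of a path\<close>

context slowness
begin

text \<open>The cost of a path: the integral of gamma of its velocity times the slowness at its
  first coordinate, so that Gamma is the supremum of the costs.\<close>

definition cost_density :: "(real \<Rightarrow> real \<times> real) \<Rightarrow> real \<Rightarrow> real" where
  "cost_density g s = gam (vector_derivative g (at s)) * \<kappa> (fst (g s))"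

definition cost :: "(real \<Rightarrow> real \<times> real) \<Rightarrow> real" where
  "cost g = integral {0..1} (cost_density g)"

lemma cost_nonneg: "0 \<le> cost g"
proof (cases "cost_density g integrable_on {0..1}")
  case True
  then show ?thesis unfolding cost_def
    by (rule integral_nonneg) (simp add: cost_density_def gam_def nonneg)
qed (simp add: cost_def not_integrable_integral)

lemma cost_le_by_pointwise:
  assumes T: "finite T" and \<alpha>\<beta>: "0 \<le> \<alpha>" "\<beta> \<le> 1" and e: "0 < e"
    and int: "cost_density g integrable_on {\<alpha>..\<beta>}"
    and vdg: "\<And>s. s \<in> {0..1} - T \<Longrightarrow> vector_derivative g (at s) = (A s, B s)"
    and chain: "((\<lambda>s. A s * \<kappa> (fst (g s))) has_integral I) {\<alpha>..\<beta>}"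
    and P: "(P has_integral p) {\<alpha>..\<beta>}" and Q: "(Q has_integral q) {\<alpha>..\<beta>}"
    and pw: "\<And>s. s \<in> {0..1} - T \<Longrightarrow>
      0 \<le> P s \<and> 0 \<le> Q s \<and> gam (A s, B s) \<le> \<theta> * A s + (2 * P s + e * Q s + P s / e)"
  shows "integral {\<alpha>..\<beta>} (cost_density g) \<le> \<theta> * I + M * (2 * p + e * q + p / e)"
proof -
  define R where "R s = \<theta> * (A s * \<kappa> (fst (g s))) + M * (2 * P s + e * Q s + P s / e)" for s
  have R: "(R has_integral \<theta> * I + M * (2 * p + e * q + p / e)) {\<alpha>..\<beta>}"
    unfolding R_def by (intro has_integral_add has_integral_mult_right has_integral_divide chain P Q)
  have "integral {\<alpha>..\<beta>} (cost_density g) \<le> integral {\<alpha>..\<beta>} R"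
  proof (rule integral_le_finite[OF int has_integral_integrable[OF R] T])
    fix s assume "s \<in> {\<alpha><..<\<beta>} - T"
    then have s: "s \<in> {0..1} - T" using \<alpha>\<beta> by auto
    define X where "X = 2 * P s + e * Q s + P s / e"
    have X: "0 \<le> X" using pw[OF s] e unfolding X_def by simp
    have "cost_density g s = gam (A s, B s) * \<kappa> (fst (g s))"
      using vdg[OF s] by (simp add: cost_density_def)
    also have "\<dots> \<le> (\<theta> * A s + X) * \<kappa> (fst (g s))"
      using pw[OF s] unfolding X_def by (intro mult_right_mono nonneg) auto
    also have "\<dots> \<le> R s"
      using mult_left_mono[OF bounded X] unfolding R_def X_def[symmetric]
      by (simp add: algebra_simps)
    finally show "cost_density g s \<le> R s" .
  qed
  then show ?thesis using integral_unique[OF R] by simp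
qed

lemma cost_estimate:
  assumes g: "g \<in> paths_H p" and \<alpha>\<beta>: "0 \<le> \<alpha>" "\<alpha> \<le> \<beta>" "\<beta> \<le> 1" and e: "0 < e"
    and int: "cost_density g integrable_on {\<alpha>..\<beta>}"
  defines "I \<equiv> oriented_integral \<kappa> (fst (g \<alpha>)) (fst (g \<beta>))"
    and "\<Delta>V \<equiv> snd (g \<beta>) - snd (g \<alpha>)"
    and "\<Delta>U \<equiv> (fst (g \<beta>) + snd (g \<beta>)) - (fst (g \<alpha>) + snd (g \<alpha>))"
  shows "integral {\<alpha>..\<beta>} (cost_density g) \<le> I + M * (2 * \<Delta>V + e * \<Delta>U + \<Delta>V / e)"
    and "integral {\<alpha>..\<beta>} (cost_density g) \<le> - I + M * (2 * \<Delta>U + e * \<Delta>V + \<Delta>U / e)"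
proof -
  obtain T A B where T: "finite T" and gc: "continuous_on {0..1} g"
    and vdg: "\<And>s. s \<in> {0..1} - T \<Longrightarrow> vector_derivative g (at s) = (A s, B s)"
    and AB: "\<And>s. s \<in> {0..1} - T \<Longrightarrow> 0 \<le> B s \<and> 0 \<le> A s + B s"
    and fd: "\<And>s. s \<in> {0..1} - T \<Longrightarrow> ((\<lambda>s. fst (g s)) has_real_derivative A s) (at s)"
    and V: "(B has_integral snd (g \<beta>) - snd (g \<alpha>)) {\<alpha>..\<beta>}"
    and U: "((\<lambda>s. A s + B s) has_integral
              (fst (g \<beta>) + snd (g \<beta>)) - (fst (g \<alpha>) + snd (g \<alpha>))) {\<alpha>..\<beta>}"
    using path_velocity[OF g \<alpha>\<beta>] by blast
  note V = V[folded \<Delta>V_def] and U = U[folded \<Delta>U_def]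
  have chain: "((\<lambda>s. A s * \<kappa> (fst (g s))) has_integral I) {\<alpha>..\<beta>}"
    unfolding I_def
  proof (rule chain_rule[OF T \<alpha>\<beta>(2)])
    show "continuous_on {\<alpha>..\<beta>} (\<lambda>s. fst (g s))"
      using \<alpha>\<beta> by (intro continuous_on_fst continuous_on_subset[OF gc]) auto
    show "((\<lambda>s. fst (g s)) has_real_derivative A s) (at s)" if "s \<in> {\<alpha><..<\<beta>} - T" for s
      using fd that \<alpha>\<beta> by auto
    show "(\<lambda>s. if s \<in> T then \<bar>A s\<bar> else (A s + B s) + B s) integrable_on {\<alpha>..\<beta>}"
      by (rule integrable_spike_finite[OF T _ integrable_add[OF has_integral_integrable[OF U]
            has_integral_integrable[OF V]]]) simp
    show "\<bar>A s\<bar> \<le> (if s \<in> T then \<bar>A s\<bar> else (A s + B s) + B s)" if "s \<in> {\<alpha>..\<beta>}" for s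
      using AB[of s] that \<alpha>\<beta> by auto
  qed
  note compare = cost_le_by_pointwise[OF T \<alpha>\<beta>(1,3) e int _ chain]
  have "integral {\<alpha>..\<beta>} (cost_density g) \<le> 1 * I + M * (2 * \<Delta>V + e * \<Delta>U + \<Delta>V / e)"
    by (rule compare[OF _ V U]) (use vdg AB gam_le_plus[OF _ _ e] in auto)
  then show "integral {\<alpha>..\<beta>} (cost_density g) \<le> I + M * (2 * \<Delta>V + e * \<Delta>U + \<Delta>V / e)"
    by simp
  have "integral {\<alpha>..\<beta>} (cost_density g) \<le> -1 * I + M * (2 * \<Delta>U + e * \<Delta>V + \<Delta>U / e)"
    by (rule compare[OF _ U V]) (use vdg AB gam_le_minus[OF _ _ e] in auto)
  then show "integral {\<alpha>..\<beta>} (cost_density g) \<le> - I + M * (2 * \<Delta>U + e * \<Delta>V + \<Delta>U / e)"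
    by simp
qed

text \<open>The cost is bounded on the paths to a fixed endpoint (the endpoint fixes the oriented
  integral and the increments in the estimate above).\<close>

lemma cost_bdd_above: "bdd_above (cost ` paths_H p)"
proof (rule bdd_aboveI[where M="max 0 (oriented_integral \<kappa> 0 (fst p) + M * (3 * snd p + (fst p + snd p)))"], clarify)
  fix g assume g: "g \<in> paths_H p"
  have ends: "g 0 = (0, 0)" "g 1 = p" using g unfolding paths_H_def by auto
  show "cost g \<le> max 0 (oriented_integral \<kappa> 0 (fst p) + M * (3 * snd p + (fst p + snd p)))"
  proof (cases "cost_density g integrable_on {0..1}")
    case True
    from cost_estimate(1)[OF g _ _ _ _ True, of 1] show ?thesis
      by (simp add: cost_def ends algebra_simps)
  qed (simp add: cost_def not_integrable_integral)
qed

lemma segment_cost_ge: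
  assumes w: "w \<in> WW" and ab: "\<alpha> \<le> \<beta>"
  shows "\<bar>oriented_integral \<kappa> a (a + (\<beta> - \<alpha>) * fst w)\<bar>
           \<le> integral {\<alpha>..\<beta>} (\<lambda>s. gam w * \<kappa> (a + (s - \<alpha>) * fst w))"
proof -
  define \<phi> where "\<phi> s = a + (s - \<alpha>) * fst w" for s
  have \<phi>c: "continuous_on {\<alpha>..\<beta>} \<phi>" unfolding \<phi>_def by (intro continuous_intros)
  have chain: "((\<lambda>s. fst w * \<kappa> (\<phi> s)) has_integral oriented_integral \<kappa> (\<phi> \<alpha>) (\<phi> \<beta>)) {\<alpha>..\<beta>}"
    by (rule chain_rule[OF finite.emptyI ab \<phi>c _ integrable_const_ivl[of "\<bar>fst w\<bar>"]])
       (auto simp: \<phi>_def[abs_def] intro!: derivative_eq_intros)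
  have cost_int: "(\<lambda>s. gam w * \<kappa> (\<phi> s)) integrable_on {\<alpha>..\<beta>}"
    using integrable_on_cmult_left[OF integrable_comp[OF \<phi>c]] by simp
  have ge: "\<bar>fst w\<bar> \<le> gam w" using gam_ge_abs w by (cases w) (auto simp: WW_iff)
  have "\<theta> * oriented_integral \<kappa> (\<phi> \<alpha>) (\<phi> \<beta>) \<le> integral {\<alpha>..\<beta>} (\<lambda>s. gam w * \<kappa> (\<phi> s))"
    if "\<bar>\<theta>\<bar> = 1" for \<theta>
  proof -
    have "((\<lambda>s. \<theta> * (fst w * \<kappa> (\<phi> s))) has_integral \<theta> * oriented_integral \<kappa> (\<phi> \<alpha>) (\<phi> \<beta>)) {\<alpha>..\<beta>}"
      by (rule has_integral_mult_right[OF chain])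
    moreover have "\<theta> * (fst w * \<kappa> (\<phi> s)) \<le> gam w * \<kappa> (\<phi> s)" for s
    proof -
      have "\<theta> * fst w \<le> gam w" using ge that by (auto simp: abs_if split: if_splits)
      then have "\<theta> * fst w * \<kappa> (\<phi> s) \<le> gam w * \<kappa> (\<phi> s)" by (rule mult_right_mono[OF _ nonneg])
      then show ?thesis by (simp add: mult.assoc)
    qed
    ultimately show ?thesis
      using integral_le[OF has_integral_integrable cost_int] integral_unique by metis
  qed
  from this[of 1] this[of "-1"] show ?thesis by (simp add: \<phi>_def abs_le_iff)
qed

lemma splice_cost_head:
  assumes g: "g \<in> paths_H p" and \<sigma>: "\<sigma> \<le> 1"
  shows "(cost_density (splice_path g \<sigma> q) has_integral y) {0..\<sigma>} \<longleftrightarrow>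
         (cost_density g has_integral y) {0..\<sigma>}"
proof -
  obtain T D where T: "finite T"
    and Dd: "\<And>s. s \<in> {0..1} - T \<Longrightarrow> (g has_vector_derivative D s) (at s)"
    using paths_H_derivative[OF g] by metis
  have "cost_density (splice_path g \<sigma> q) s = cost_density g s" if "s \<in> {0..\<sigma>} - insert \<sigma> T" for s
  proof -
    have s: "s < \<sigma>" "s \<in> {0..1} - T" using that \<sigma> by auto
    have "vector_derivative (splice_path g \<sigma> q) (at s) = vector_derivative g (at s)"
      using vector_derivative_at splice_head_derivative[OF s(1) Dd[OF s(2)]] Dd[OF s(2)] by metis
    then show ?thesis using s by (simp add: cost_density_def splice_path_def)
  qed
  then show ?thesis using T by (intro has_integral_spike_finite_eq[of "insert \<sigma> T"]) auto
qed

lemma splice_cost_tail: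
  fixes g :: "real \<Rightarrow> real \<times> real" and \<sigma> :: real and q :: "real \<times> real"
  defines "w \<equiv> splice_velocity g \<sigma> q"
  shows "(cost_density (splice_path g \<sigma> q) has_integral
           integral {\<sigma>..1} (\<lambda>s. gam w * \<kappa> (fst (g \<sigma>) + (s - \<sigma>) * fst w))) {\<sigma>..1}"
proof -
  have "continuous_on {\<sigma>..1} (\<lambda>s. fst (g \<sigma>) + (s - \<sigma>) * fst w)"
    by (intro continuous_intros)
  from integrable_on_cmult_left[OF integrable_comp[OF this], of "gam w"]
  have "(\<lambda>s. gam w * \<kappa> (fst (g \<sigma>) + (s - \<sigma>) * fst w)) integrable_on {\<sigma>..1}"
    by simp
  moreover have "cost_density (splice_path g \<sigma> q) s = gam w * \<kappa> (fst (g \<sigma>) + (s - \<sigma>) * fst w)"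
    if "s \<in> {\<sigma>..1} - {\<sigma>}" for s
  proof -
    have "\<sigma> < s" using that by auto
    from vector_derivative_at[OF splice_tail_derivative[OF this]]
    have "vector_derivative (splice_path g \<sigma> q) (at s) = w" unfolding w_def .
    then show ?thesis using that by (simp add: cost_density_def splice_path_def w_def)
  qed
  ultimately show ?thesis
    by (subst has_integral_spike_finite_eq[of "{\<sigma>}"]) (auto simp: has_integral_integral)
qed

lemma splice_cost:
  fixes g :: "real \<Rightarrow> real \<times> real" and q :: "real \<times> real"
  assumes g: "g \<in> paths_H p" and \<sigma>: "0 \<le> \<sigma>" "\<sigma> < 1"
    and int: "cost_density g integrable_on {0..1}"
  defines "w \<equiv> splice_velocity g \<sigma> q"
  shows "cost (splice_path g \<sigma> q) = integral {0..\<sigma>} (cost_density g)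
           + integral {\<sigma>..1} (\<lambda>s. gam w * \<kappa> (fst (g \<sigma>) + (s - \<sigma>) * fst w))"
proof -
  have "cost_density g integrable_on {0..\<sigma>}" using integrable_on_subinterval[OF int] \<sigma> by auto
  then have head: "(cost_density (splice_path g \<sigma> q) has_integral
                     integral {0..\<sigma>} (cost_density g)) {0..\<sigma>}"
    unfolding splice_cost_head[OF g less_imp_le[OF \<sigma>(2)]] by (rule integrable_integral)
  from has_integral_combine[OF \<sigma>(1) less_imp_le[OF \<sigma>(2)] head splice_cost_tail]
  show ?thesis unfolding cost_def w_def by (rule integral_unique)
qed

text \<open>After a time \<sigma> at which g touches the boundary of (x, y) - W, the cost of g exceeds the
  absolute value of the oriented integral of the slowness from fst (g \<sigma>) to x by at most
  M (x + 2y + 4) sqrt \<delta>: use the estimate with +I if the height of g \<sigma> is y (then the height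
  grows by \<delta>), and with -I if its level is x + y (then the level grows by \<delta>).\<close>

lemma tail_cost_bound:
  assumes xy: "(x, y) \<in> WW" and \<delta>: "0 < \<delta>" "\<delta> \<le> 1" and g: "g \<in> paths_H (x, y + \<delta>)"
    and \<sigma>: "0 \<le> \<sigma>" "\<sigma> < 1" and g\<sigma>: "g \<sigma> \<in> WW"
    and touch: "fst (g \<sigma>) + snd (g \<sigma>) = x + y \<or> snd (g \<sigma>) = y"
    and int: "cost_density g integrable_on {\<sigma>..1}"
  shows "integral {\<sigma>..1} (cost_density g)
           \<le> \<bar>oriented_integral \<kappa> (fst (g \<sigma>)) x\<bar> + M * (x + 2 * y + 4) * sqrt \<delta>"
proof -
  define I where "I = oriented_integral \<kappa> (fst (g \<sigma>)) x"
  have g1: "g 1 = (x, y + \<delta>)" using g unfolding paths_H_def by auto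
  have xy': "0 \<le> y" "0 \<le> x + y" using xy by (auto simp: WW_iff)
  have g\<sigma>': "0 \<le> snd (g \<sigma>)" "0 \<le> fst (g \<sigma>) + snd (g \<sigma>)"
    using g\<sigma> by (cases "g \<sigma>", auto simp: WW_iff)+
  have e: "0 < sqrt \<delta>" using \<delta> by simp
  have error: "M * X \<le> M * (x + 2 * y + 4) * sqrt \<delta>" if "X \<le> (x + 2 * y + 4) * sqrt \<delta>" for X
    using mult_left_mono[OF that bound_nonneg] by (simp add: mult.assoc)
  note estimate = cost_estimate[OF g \<sigma>(1) less_imp_le[OF \<sigma>(2)] order_refl e int]
  show ?thesis
    using touch
  proof
    assume level: "fst (g \<sigma>) + snd (g \<sigma>) = x + y"
    have "(fst (g 1) + snd (g 1)) - (fst (g \<sigma>) + snd (g \<sigma>)) = \<delta>"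
      using level g1 by simp
    from estimate(2)[unfolded this]
    have "integral {\<sigma>..1} (cost_density g)
        \<le> - I + M * (2 * \<delta> + sqrt \<delta> * (y + \<delta> - snd (g \<sigma>)) + \<delta> / sqrt \<delta>)"
      using g1 unfolding I_def by simp
    moreover have "2 * \<delta> + sqrt \<delta> * (y + \<delta> - snd (g \<sigma>)) + \<delta> / sqrt \<delta> \<le> (x + 2 * y + 4) * sqrt \<delta>"
      using g\<sigma>' xy' \<delta> by (intro sqrt_budget) auto
    moreover note error[OF this]
    ultimately show ?thesis using abs_ge_minus_self[of I] I_def by linarith
  next
    assume height: "snd (g \<sigma>) = y"
    have "snd (g 1) - snd (g \<sigma>) = \<delta>"
      using height g1 by simp
    from estimate(1)[unfolded this]
    have "integral {\<sigma>..1} (cost_density g)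
        \<le> I + M * (2 * \<delta> + sqrt \<delta> * (x + (y + \<delta>) - (fst (g \<sigma>) + snd (g \<sigma>))) + \<delta> / sqrt \<delta>)"
      using g1 unfolding I_def by simp
    moreover have "2 * \<delta> + sqrt \<delta> * (x + (y + \<delta>) - (fst (g \<sigma>) + snd (g \<sigma>))) + \<delta> / sqrt \<delta>
                     \<le> (x + 2 * y + 4) * sqrt \<delta>"
      using g\<sigma>' xy' \<delta> by (intro sqrt_budget) auto
    moreover note error[OF this]
    ultimately show ?thesis using abs_ge_self[of I] I_def by linarith
  qed
qed

text \<open>Splice g at a time \<sigma> where it touches the boundary of (x, y) - W:
  the heads agree, the segment costs at least |I|, and the tail of g at most |I| + O(sqrt \<delta>).\<close>

lemma raise_endpoint:
  assumes xy: "(x, y) \<in> WW" and \<delta>: "0 < \<delta>" "\<delta> \<le> 1" and g: "g \<in> paths_H (x, y + \<delta>)"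
    and int: "cost_density g integrable_on {0..1}"
  obtains h where "h \<in> paths_H (x, y)" "cost g \<le> cost h + M * (x + 2 * y + 4) * sqrt \<delta>"
proof -
  obtain gc: "continuous_on {0..1} g" and gW: "\<And>s. s \<in> {0..1} \<Longrightarrow> g s \<in> WW"
    and g0: "g 0 = (0, 0)" and g1: "g 1 = (x, y + \<delta>)"
    using paths_H_derivative[OF g] by metis
  obtain \<sigma> where \<sigma>: "0 \<le> \<sigma>" "\<sigma> < 1" and below: "(x, y) - g \<sigma> \<in> WW"
    and touch: "fst (g \<sigma>) + snd (g \<sigma>) = x + y \<or> snd (g \<sigma>) = y"
    using exit_time[OF gc g0 g1 xy \<delta>(1)] by blast
  define w where "w = splice_velocity g \<sigma> (x, y)"
  define I where "I = oriented_integral \<kappa> (fst (g \<sigma>)) x"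
  have "(1 - \<sigma>) * inverse (1 - \<sigma>) = 1" using \<sigma> by simp
  then have "fst (g \<sigma>) + (1 - \<sigma>) * fst w = x"
    by (simp add: w_def splice_velocity_def mult.assoc[symmetric])
  then have segment: "\<bar>I\<bar> \<le> integral {\<sigma>..1} (\<lambda>s. gam w * \<kappa> (fst (g \<sigma>) + (s - \<sigma>) * fst w))"
    using segment_cost_ge[OF splice_velocity_WW[of "(x, y)" g \<sigma>, OF below \<sigma>(2)], of \<sigma> 1 "fst (g \<sigma>)"]
      \<sigma> by (simp add: I_def w_def)
  have "integral {\<sigma>..1} (cost_density g) \<le> \<bar>I\<bar> + M * (x + 2 * y + 4) * sqrt \<delta>"
    unfolding I_def using gW \<sigma> integrable_on_subinterval[OF int]
    by (intro tail_cost_bound[OF xy \<delta> g \<sigma> _ touch]) auto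
  moreover have "cost g = integral {0..\<sigma>} (cost_density g) + integral {\<sigma>..1} (cost_density g)"
    using Henstock_Kurzweil_Integration.integral_combine[OF \<sigma>(1) less_imp_le[OF \<sigma>(2)] int]
    by (simp add: cost_def)
  moreover note splice_cost[OF g \<sigma> int, where q="(x, y)", folded w_def]
  ultimately have "cost g \<le> cost (splice_path g \<sigma> (x, y)) + M * (x + 2 * y + 4) * sqrt \<delta>"
    using segment by linarith
  then show ?thesis by (rule that[OF splice_in_paths_H[OF g \<sigma> xy below]])
qed

lemma sup_cost_increment:
  assumes xy: "(x, y) \<in> WW" and \<delta>: "0 < \<delta>" "\<delta> \<le> 1"
  shows "(SUP g\<in>paths_H (x, y + \<delta>). cost g)
           \<le> (SUP g\<in>paths_H (x, y). cost g) + M * (x + 2 * y + 4) * sqrt \<delta>"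
proof (rule cSUP_least)
  have "(x, y + \<delta>) \<in> WW" using xy \<delta> by (simp add: WW_iff)
  then show "paths_H (x, y + \<delta>) \<noteq> {}" using line_in_paths_H by blast
  have error_nonneg: "0 \<le> M * (x + 2 * y + 4) * sqrt \<delta>"
    using xy \<delta> bound_nonneg by (simp add: WW_iff)
  have sup_nonneg: "0 \<le> (SUP g\<in>paths_H (x, y). cost g)"
    using cost_nonneg cSUP_upper[OF line_in_paths_H[OF xy] cost_bdd_above] by (rule order_trans)
  fix g assume g: "g \<in> paths_H (x, y + \<delta>)"
  show "cost g \<le> (SUP g\<in>paths_H (x, y). cost g) + M * (x + 2 * y + 4) * sqrt \<delta>"
  proof (cases "cost_density g integrable_on {0..1}")
    case True
    then obtain h where h: "h \<in> paths_H (x, y)"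
      and le: "cost g \<le> cost h + M * (x + 2 * y + 4) * sqrt \<delta>"
      using raise_endpoint[OF xy \<delta> g] by blast
    have "cost h \<le> (SUP g\<in>paths_H (x, y). cost g)" by (rule cSUP_upper[OF h cost_bdd_above])
    then show ?thesis using le by linarith
  next
    case False
    then show ?thesis using error_nonneg sup_nonneg by (simp add: cost_def not_integrable_integral)
  qed
qed

end

theorem mainTheorem10:
  fixes c :: "real \<Rightarrow> real" and q x y :: real
  assumes "step_speed c" and "(x, y) \<in> WW"
  shows "\<exists>C::real. \<forall>\<delta>::real. 0 < \<delta> \<and> \<delta> \<le> 1 \<longrightarrow>
           Gamma_q c q (x, y + \<delta>) - Gamma_q c q (x, y) < C * sqrt \<delta>"
proof -
  obtain M where "slowness (\<lambda>t. inverse (c (t - q))) M"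
    using step_speed_slowness[OF assms(1)] by blast
  then interpret slowness "\<lambda>t. inverse (c (t - q))" M .
  have Gamma: "Gamma_q c q p = (SUP g\<in>paths_H p. cost g)" for p
    unfolding Gamma_q_def cost_def cost_density_def by (simp add: divide_inverse)
  show ?thesis
  proof (intro exI[of _ "M * (x + 2 * y + 4) + 1"] allI impI)
    fix \<delta> :: real assume \<delta>: "0 < \<delta> \<and> \<delta> \<le> 1"
    then have "M * (x + 2 * y + 4) * sqrt \<delta> < (M * (x + 2 * y + 4) + 1) * sqrt \<delta>"
      by (simp add: distrib_right)
    then show "Gamma_q c q (x, y + \<delta>) - Gamma_q c q (x, y) < (M * (x + 2 * y + 4) + 1) * sqrt \<delta>"
      using sup_cost_increment[OF assms(2), of \<delta>] \<delta> unfolding Gamma by linarith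
  qed
qed

end
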